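(* We have $\mathcal{P}(\mathrm{Cr}_2)=\mathcal{AM}(\mathrm{Cr}_2)$, and $\mathcal{P}(\mathrm{Cr}_n)\ne\mathcal{AM}(\mathrm{Cr}_n)$ for all $n>2$.
   Context: For $n\ge2$, the $n$-crown $\mathrm{Cr}_n$ is the poset $\{x_1,\dots,x_n,y_1,\dots,y_n\}$ whose only relations between distinct elements are $x_i<y_i$ ($1\le i\le n$), $x_{i+1}<y_i$ ($1\le i\le n-1$) and $x_1<y_n$. For a finite connected poset $X$ and $x<y$, $e_{xy}$ denotes the incidence-algebra basis element, and $B=\{e_{xy}:x<y\}$. $\mathcal{C}(X)$ is the set of maximal chains. For a bijection $\theta:B\to B$ and $C:u_1<\dots<u_m$ in $\mathcal{C}(X)$, $\theta$ is increasing on $C$ if there is $D:v_1<\dots<v_m$ in $\mathcal{C}(X)$ with $\theta(e_{u_iu_j})=e_{v_iv_j}$ for all $i<j$, decreasing if $\theta(e_{u_iu_j})=e_{v_{m-j+1}v_{m-i+1}}$ for all $i<j$. $\mathcal{M}(X)$: bijections $B\to B$ increasing or decreasing on every maximal chain. A walk is a sequence $u_0,\dots,u_m$ where for each $i$ one of $u_i,u_{i+1}$ covers the other; closed if $u_0=u_m$. For a closed walk $\Gamma:u_0,\dots,u_m=u_0$ and $z\in X$: $s^+_{\theta,\Gamma}(z)=|\{i: u_i<u_{i+1},\ \exists w>z,\ \theta(e_{zw})=e_{u_iu_{i+1}}\}|$, $s^-_{\theta,\Gamma}(z)=|\{i: u_i>u_{i+1},\ \exists w>z,\ \theta(e_{zw})=e_{u_{i+1}u_i}\}|$,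 $t^+_{\theta,\Gamma}(z)=|\{i: u_i<u_{i+1},\ \exists w<z,\ \theta(e_{wz})=e_{u_iu_{i+1}}\}|$, $t^-_{\theta,\Gamma}(z)=|\{i: u_i>u_{i+1},\ \exists w<z,\ \theta(e_{wz})=e_{u_{i+1}u_i}\}|$, $0\le i\le m-1$. $\theta$ is admissible if $s^+-s^-=t^+-t^-$ at every $z$ for every closed walk; $\mathcal{AM}(X)$ is the set of admissible elements of $\mathcal{M}(X)$. $\theta:B\to B$ is proper if there is an automorphism $\lambda$ of $X$ with $\theta(e_{xy})=e_{\lambda(x)\lambda(y)}$ for all $x<y$, or an anti-automorphism $\lambda$ with $\theta(e_{xy})=e_{\lambda(y)\lambda(x)}$ for all $x<y$; $\mathcal{P}(X)$ is the set of proper bijections. *)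

theory Defs
  imports "HOL-Library.FuncSet"
begin

text \<open>A finite poset is given by a carrier X and a strict order lt.
 The basis element e_xy (x < y) is represented by the pair (x,y).\<close>

definition basis :: "'a set \<Rightarrow> ('a \<Rightarrow> 'a \<Rightarrow> bool) \<Rightarrow> ('a \<times> 'a) set" where
  "basis X lt = {(x,y). x \<in> X \<and> y \<in> X \<and> lt x y}"

definition is_chain :: "'a set \<Rightarrow> ('a \<Rightarrow> 'a \<Rightarrow> bool) \<Rightarrow> 'a list \<Rightarrow> bool" where
  "is_chain X lt C \<longleftrightarrow> set C \<subseteq> X \<and> sorted_wrt lt C"

definition max_chain :: "'a set \<Rightarrow> ('a \<Rightarrow> 'a \<Rightarrow> bool) \<Rightarrow> 'a list \<Rightarrow> bool" where
  "max_chain X lt C \<longleftrightarrow> C \<noteq> [] \<and> is_chain X lt C \<and>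
     \<not> (\<exists>C'. is_chain X lt C' \<and> set C \<subset> set C')"

definition increasing_on :: "'a set \<Rightarrow> ('a \<Rightarrow> 'a \<Rightarrow> bool) \<Rightarrow> ('a \<times> 'a \<Rightarrow> 'a \<times> 'a) \<Rightarrow> 'a list \<Rightarrow> bool" where
  "increasing_on X lt \<theta> C \<longleftrightarrow> (\<exists>D. max_chain X lt D \<and> length D = length C \<and>
     (\<forall>i j. i < j \<and> j < length C \<longrightarrow> \<theta> (C!i, C!j) = (D!i, D!j)))"

definition decreasing_on :: "'a set \<Rightarrow> ('a \<Rightarrow> 'a \<Rightarrow> bool) \<Rightarrow> ('a \<times> 'a \<Rightarrow> 'a \<times> 'a) \<Rightarrow> 'a list \<Rightarrow> bool" where
  "decreasing_on X lt \<theta> C \<longleftrightarrow> (\<exists>D. max_chain X lt D \<and> length D = length C \<and>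
     (\<forall>i j. i < j \<and> j < length C \<longrightarrow>
        \<theta> (C!i, C!j) = (D!(length C - 1 - j), D!(length C - 1 - i))))"

definition bijB :: "'a set \<Rightarrow> ('a \<Rightarrow> 'a \<Rightarrow> bool) \<Rightarrow> ('a \<times> 'a \<Rightarrow> 'a \<times> 'a) set" where
  "bijB X lt = {\<theta>. bij_betw \<theta> (basis X lt) (basis X lt) \<and> \<theta> \<in> extensional (basis X lt)}"

definition Mset :: "'a set \<Rightarrow> ('a \<Rightarrow> 'a \<Rightarrow> bool) \<Rightarrow> ('a \<times> 'a \<Rightarrow> 'a \<times> 'a) set" where
  "Mset X lt = {\<theta> \<in> bijB X lt. \<forall>C. max_chain X lt C \<longrightarrow>
      increasing_on X lt \<theta> C \<or> decreasing_on X lt \<theta> C}"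

definition covers :: "'a set \<Rightarrow> ('a \<Rightarrow> 'a \<Rightarrow> bool) \<Rightarrow> 'a \<Rightarrow> 'a \<Rightarrow> bool" where
  "covers X lt x y \<longleftrightarrow> x \<in> X \<and> y \<in> X \<and> lt x y \<and> \<not> (\<exists>z\<in>X. lt x z \<and> lt z y)"

definition closed_walk :: "'a set \<Rightarrow> ('a \<Rightarrow> 'a \<Rightarrow> bool) \<Rightarrow> 'a list \<Rightarrow> bool" where
  "closed_walk X lt W \<longleftrightarrow> W \<noteq> [] \<and> set W \<subseteq> X \<and> hd W = last W \<and>
     (\<forall>i. Suc i < length W \<longrightarrow> covers X lt (W!i) (W!Suc i) \<or> covers X lt (W!Suc i) (W!i))"

definition s_plus where
  "s_plus X lt \<theta> W z = card {i. Suc i < length W \<and> lt (W!i) (W!Suc i) \<and>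
      (\<exists>w\<in>X. lt z w \<and> \<theta> (z,w) = (W!i, W!Suc i))}"
definition s_minus where
  "s_minus X lt \<theta> W z = card {i. Suc i < length W \<and> lt (W!Suc i) (W!i) \<and>
      (\<exists>w\<in>X. lt z w \<and> \<theta> (z,w) = (W!Suc i, W!i))}"
definition t_plus where
  "t_plus X lt \<theta> W z = card {i. Suc i < length W \<and> lt (W!i) (W!Suc i) \<and>
      (\<exists>w\<in>X. lt w z \<and> \<theta> (w,z) = (W!i, W!Suc i))}"
definition t_minus where
  "t_minus X lt \<theta> W z = card {i. Suc i < length W \<and> lt (W!Suc i) (W!i) \<and>
      (\<exists>w\<in>X. lt w z \<and> \<theta> (w,z) = (W!Suc i, W!i))}"

definition admissible :: "'a set \<Rightarrow> ('a \<Rightarrow> 'a \<Rightarrow> bool) \<Rightarrow> ('a \<times> 'a \<Rightarrow> 'a \<times> 'a) \<Rightarrow> bool" where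
  "admissible X lt \<theta> \<longleftrightarrow> (\<forall>W. closed_walk X lt W \<longrightarrow> (\<forall>z\<in>X.
      int (s_plus X lt \<theta> W z) - int (s_minus X lt \<theta> W z) =
      int (t_plus X lt \<theta> W z) - int (t_minus X lt \<theta> W z)))"

definition AMset :: "'a set \<Rightarrow> ('a \<Rightarrow> 'a \<Rightarrow> bool) \<Rightarrow> ('a \<times> 'a \<Rightarrow> 'a \<times> 'a) set" where
  "AMset X lt = {\<theta> \<in> Mset X lt. admissible X lt \<theta>}"

definition Pset :: "'a set \<Rightarrow> ('a \<Rightarrow> 'a \<Rightarrow> bool) \<Rightarrow> ('a \<times> 'a \<Rightarrow> 'a \<times> 'a) set" where
  "Pset X lt = {\<theta> \<in> bijB X lt.
     (\<exists>\<phi>. bij_betw \<phi> X X \<and> (\<forall>x\<in>X. \<forall>y\<in>X. lt x y \<longleftrightarrow> lt (\<phi> x) (\<phi> y)) \<and>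
          (\<forall>x\<in>X. \<forall>y\<in>X. lt x y \<longrightarrow> \<theta> (x,y) = (\<phi> x, \<phi> y))) \<or>
     (\<exists>\<phi>. bij_betw \<phi> X X \<and> (\<forall>x\<in>X. \<forall>y\<in>X. lt x y \<longleftrightarrow> lt (\<phi> y) (\<phi> x)) \<and>
          (\<forall>x\<in>X. \<forall>y\<in>X. lt x y \<longrightarrow> \<theta> (x,y) = (\<phi> y, \<phi> x)))}"

text \<open>The n-crown: x_i = (i, False), y_i = (i, True), 1 \<le> i \<le> n.\<close>
definition crown_X :: "nat \<Rightarrow> (nat \<times> bool) set" where
  "crown_X n = {(i,b). 1 \<le> i \<and> i \<le> n}"

definition crown_less :: "nat \<Rightarrow> nat \<times> bool \<Rightarrow> nat \<times> bool \<Rightarrow> bool" where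
  "crown_less n a b \<longleftrightarrow> a \<in> crown_X n \<and> b \<in> crown_X n \<and> \<not> snd a \<and> snd b \<and>
     (fst a = fst b \<or> fst a = fst b + 1 \<or> (fst a = 1 \<and> fst b = n))"

end

(*
  A bijection theta of the basis is admissible iff, for every z, its cut cochain
  c_z(a,b) = [e_ab = theta(e_zw) for some w > z] - [e_ab = theta(e_wz) for some w < z]
  integrates to zero along every closed walk of the Hasse diagram; this holds as soon as
  c_z is the coboundary of an integer potential on the vertices.  For an automorphism or
  anti-automorphism phi, the indicator of phi z is such a potential, so proper
  bijections are admissible.

  Crowns have height one, so every bijection of the basis lies in M(Cr_n).  For n >= 3
  the transposition of e_x1y1 and e_x2y2 still has potentials, but it is not proper:
  an automorphism would send x1 and x2 to x2, an anti-automorphism would send y2 to x1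
  and to x3.  For n = 2 the Hasse diagram is the 4-cycle x1 y1 x2 y2, and admissibility
  along it forces the two edges at each vertex onto one diagonal edge (x_i y_i) and one
  antidiagonal edge; such a bijection maps edges sharing a vertex to edges sharing a
  vertex, and the common vertex defines an automorphism or anti-automorphism inducing it.
*)
theory Submission
  imports Defs "HOL-Combinatorics.Transposition"
begin

section \<open>Admissibility via potentials\<close>

definition cut_cochain :: "'a set \<Rightarrow> ('a \<Rightarrow> 'a \<Rightarrow> bool) \<Rightarrow> ('a \<times> 'a \<Rightarrow> 'a \<times> 'a) \<Rightarrow> 'a \<Rightarrow> 'a \<Rightarrow> 'a \<Rightarrow> int" where
  "cut_cochain X lt \<theta> z a b =
     of_bool (\<exists>w\<in>X. lt z w \<and> \<theta> (z,w) = (a,b)) - of_bool (\<exists>w\<in>X. lt w z \<and> \<theta> (w,z) = (a,b))"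

definition walk_integral :: "('a \<Rightarrow> 'a \<Rightarrow> bool) \<Rightarrow> ('a \<Rightarrow> 'a \<Rightarrow> int) \<Rightarrow> 'a list \<Rightarrow> int" where
  "walk_integral lt c W = (\<Sum>i<length W - 1.
     of_bool (lt (W!i) (W!Suc i)) * c (W!i) (W!Suc i) - of_bool (lt (W!Suc i) (W!i)) * c (W!Suc i) (W!i))"

lemma card_steps_eq_sum:
  "int (card {i. Suc i < length W \<and> P i}) = (\<Sum>i<length W - 1. of_bool (P i))"
proof -
  have "{i. Suc i < length W \<and> P i} = {..<length W - 1} \<inter> {i. P i}" by auto
  then show ?thesis by simp
qed

lemma walk_integral_cut_cochain:
  "walk_integral lt (cut_cochain X lt \<theta> z) W =
     (int (s_plus X lt \<theta> W z) - int (s_minus X lt \<theta> W z)) -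
     (int (t_plus X lt \<theta> W z) - int (t_minus X lt \<theta> W z))"
  unfolding s_plus_def s_minus_def t_plus_def t_minus_def card_steps_eq_sum
    sum_subtractf[symmetric] walk_integral_def cut_cochain_def
  by (rule sum.cong) auto

lemma admissible_iff_walk_integral:
  "admissible X lt \<theta> \<longleftrightarrow>
     (\<forall>W. closed_walk X lt W \<longrightarrow> (\<forall>z\<in>X. walk_integral lt (cut_cochain X lt \<theta> z) W = 0))"
  unfolding admissible_def walk_integral_cut_cochain by simp

lemma walk_integral_uminus: "walk_integral lt (\<lambda>a b. - c a b) W = - walk_integral lt c W"
  unfolding walk_integral_def by (simp add: sum_negf[symmetric])

lemma walk_integral_coboundary:
  assumes walk: "closed_walk X lt W" and asym: "\<And>a b. lt a b \<Longrightarrow> \<not> lt b a"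
    and potential: "\<And>a b. a \<in> X \<Longrightarrow> b \<in> X \<Longrightarrow> lt a b \<Longrightarrow> c a b = g b - g a"
  shows "walk_integral lt c W = 0"
proof -
  define m where "m = length W - 1"
  have step: "of_bool (lt (W!i) (W!Suc i)) * c (W!i) (W!Suc i) - of_bool (lt (W!Suc i) (W!i)) * c (W!Suc i) (W!i)
      = g (W!Suc i) - g (W!i)" if "i < m" for i
  proof -
    have "Suc i < length W" using that m_def by simp
    then have "W!i \<in> X" "W!Suc i \<in> X" "lt (W!i) (W!Suc i) \<or> lt (W!Suc i) (W!i)"
      using walk unfolding closed_walk_def covers_def by auto
    then show ?thesis using asym potential by auto
  qed
  have "W \<noteq> []" "hd W = last W" using walk unfolding closed_walk_def by auto
  then have "W!m = W!0" unfolding m_def by (simp add: hd_conv_nth last_conv_nth)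
  then have "(\<Sum>i<m. g (W!Suc i) - g (W!i)) = 0"
    using sum_lessThan_telescope[of "\<lambda>i. g (W!i)" m] by simp
  moreover have "walk_integral lt c W = (\<Sum>i<m. g (W!Suc i) - g (W!i))"
    unfolding walk_integral_def m_def[symmetric] using step by (intro sum.cong) auto
  ultimately show ?thesis by simp
qed

lemma admissible_if_potentials:
  assumes asym: "\<And>a b. lt a b \<Longrightarrow> \<not> lt b a"
    and potentials: "\<And>z. z \<in> X \<Longrightarrow>
      \<exists>g. \<forall>a\<in>X. \<forall>b\<in>X. lt a b \<longrightarrow> cut_cochain X lt \<theta> z a b = g b - g a"
  shows "admissible X lt \<theta>"
  unfolding admissible_iff_walk_integral
proof (intro allI impI ballI)
  fix W z assume "closed_walk X lt W" "z \<in> X"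
  with potentials obtain g where "\<forall>a\<in>X. \<forall>b\<in>X. lt a b \<longrightarrow> cut_cochain X lt \<theta> z a b = g b - g a"
    by blast
  with \<open>closed_walk X lt W\<close> show "walk_integral lt (cut_cochain X lt \<theta> z) W = 0"
    using walk_integral_coboundary asym by blast
qed

lemma iso_edge_iff:
  assumes bij: "bij_betw \<phi> X X" and iso: "\<forall>x\<in>X. \<forall>y\<in>X. lt x y \<longleftrightarrow> lt' (\<phi> x) (\<phi> y)"
    and z: "z \<in> X" and "a \<in> X" "b \<in> X" "lt' a b"
  shows "(\<exists>w\<in>X. lt z w \<and> (\<phi> z, \<phi> w) = (a,b)) \<longleftrightarrow> a = \<phi> z"
    and "(\<exists>w\<in>X. lt w z \<and> (\<phi> w, \<phi> z) = (a,b)) \<longleftrightarrow> b = \<phi> z"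
proof -
  obtain a' b' where ab': "a' \<in> X" "b' \<in> X" "a = \<phi> a'" "b = \<phi> b'"
    using bij \<open>a \<in> X\<close> \<open>b \<in> X\<close> unfolding bij_betw_def by blast
  with iso \<open>lt' a b\<close> have "lt a' b'" by blast
  have inj: "inj_on \<phi> X" using bij by (rule bij_betw_imp_inj_on)
  show "(\<exists>w\<in>X. lt z w \<and> (\<phi> z, \<phi> w) = (a,b)) \<longleftrightarrow> a = \<phi> z"
  proof
    assume "a = \<phi> z"
    then have "a' = z" using inj_onD[OF inj _ ab'(1) z] ab'(3) by simp
    then show "\<exists>w\<in>X. lt z w \<and> (\<phi> z, \<phi> w) = (a,b)" using \<open>lt a' b'\<close> ab' by blast
  qed blast
  show "(\<exists>w\<in>X. lt w z \<and> (\<phi> w, \<phi> z) = (a,b)) \<longleftrightarrow> b = \<phi> z"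
  proof
    assume "b = \<phi> z"
    then have "b' = z" using inj_onD[OF inj _ ab'(2) z] ab'(4) by simp
    then show "\<exists>w\<in>X. lt w z \<and> (\<phi> w, \<phi> z) = (a,b)" using \<open>lt a' b'\<close> ab' by blast
  qed blast
qed

lemma proper_imp_admissible:
  assumes asym: "\<And>a b. lt a b \<Longrightarrow> \<not> lt b a" and proper: "\<theta> \<in> Pset X lt"
  shows "admissible X lt \<theta>"
proof (rule admissible_if_potentials[OF asym])
  fix z assume z: "z \<in> X"
  from proper consider
      \<phi> where "bij_betw \<phi> X X" "\<forall>x\<in>X. \<forall>y\<in>X. lt x y \<longleftrightarrow> lt (\<phi> x) (\<phi> y)"
        "\<forall>x\<in>X. \<forall>y\<in>X. lt x y \<longrightarrow> \<theta> (x,y) = (\<phi> x, \<phi> y)"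
    | \<phi> where "bij_betw \<phi> X X" "\<forall>x\<in>X. \<forall>y\<in>X. lt x y \<longleftrightarrow> lt (\<phi> y) (\<phi> x)"
        "\<forall>x\<in>X. \<forall>y\<in>X. lt x y \<longrightarrow> \<theta> (x,y) = (\<phi> y, \<phi> x)"
    unfolding Pset_def by blast
  then show "\<exists>g. \<forall>a\<in>X. \<forall>b\<in>X. lt a b \<longrightarrow> cut_cochain X lt \<theta> z a b = g b - g a"
  proof cases
    case 1
    have "cut_cochain X lt \<theta> z a b = of_bool (a = \<phi> z) - of_bool (b = \<phi> z)"
      if "a \<in> X" "b \<in> X" "lt a b" for a b
    proof -
      have "(\<exists>w\<in>X. lt z w \<and> \<theta> (z,w) = (a,b)) \<longleftrightarrow> (\<exists>w\<in>X. lt z w \<and> (\<phi> z, \<phi> w) = (a,b))"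
        "(\<exists>w\<in>X. lt w z \<and> \<theta> (w,z) = (a,b)) \<longleftrightarrow> (\<exists>w\<in>X. lt w z \<and> (\<phi> w, \<phi> z) = (a,b))"
        using 1(3) z by auto
      then have "cut_cochain X lt \<theta> z a b =
          of_bool (\<exists>w\<in>X. lt z w \<and> (\<phi> z, \<phi> w) = (a,b)) - of_bool (\<exists>w\<in>X. lt w z \<and> (\<phi> w, \<phi> z) = (a,b))"
        unfolding cut_cochain_def by simp
      then show ?thesis using iso_edge_iff[OF 1(1,2) z that] by simp
    qed
    then show ?thesis by (intro exI[of _ "\<lambda>v. - of_bool (v = \<phi> z)"]) simp
  next
    case 2
    have "cut_cochain X lt \<theta> z a b = of_bool (b = \<phi> z) - of_bool (a = \<phi> z)"
      if "a \<in> X" "b \<in> X" "lt a b" for a b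
    proof -
      have "(\<exists>w\<in>X. lt z w \<and> \<theta> (z,w) = (a,b)) \<longleftrightarrow> (\<exists>w\<in>X. lt z w \<and> (\<phi> z, \<phi> w) = (b,a))"
        "(\<exists>w\<in>X. lt w z \<and> \<theta> (w,z) = (a,b)) \<longleftrightarrow> (\<exists>w\<in>X. lt w z \<and> (\<phi> w, \<phi> z) = (b,a))"
        using 2(3) z by auto
      then have "cut_cochain X lt \<theta> z a b =
          of_bool (\<exists>w\<in>X. lt z w \<and> (\<phi> z, \<phi> w) = (b,a)) - of_bool (\<exists>w\<in>X. lt w z \<and> (\<phi> w, \<phi> z) = (b,a))"
        unfolding cut_cochain_def by simp
      then show ?thesis using iso_edge_iff[OF 2(1,2) z that(2,1)] \<open>lt a b\<close> by simp
    qed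
    then show ?thesis by (intro exI[of _ "\<lambda>v. of_bool (v = \<phi> z)"]) simp
  qed
qed

lemma cut_cochain_involution:
  assumes closed: "\<And>e. e \<in> basis X lt \<Longrightarrow> \<tau> e \<in> basis X lt"
    and involutive: "\<And>e. e \<in> basis X lt \<Longrightarrow> \<tau> (\<tau> e) = e"
    and ab: "(a,b) \<in> basis X lt" and z: "z \<in> X"
  shows "cut_cochain X lt \<tau> z a b = of_bool (fst (\<tau> (a,b)) = z) - of_bool (snd (\<tau> (a,b)) = z)"
proof -
  obtain p q where pq: "\<tau> (a,b) = (p,q)" "(p,q) \<in> basis X lt" "\<tau> (p,q) = (a,b)"
    using closed[OF ab] involutive[OF ab] by (metis prod.exhaust)
  have "\<tau> (v,w) = (a,b) \<longleftrightarrow> (v,w) = (p,q)" if "(v,w) \<in> basis X lt" for v w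
    using involutive[OF that] pq by metis
  then have "(\<exists>w\<in>X. lt z w \<and> \<tau> (z,w) = (a,b)) \<longleftrightarrow> p = z"
    and "(\<exists>w\<in>X. lt w z \<and> \<tau> (w,z) = (a,b)) \<longleftrightarrow> q = z"
    using pq(2) z unfolding basis_def by auto
  then show ?thesis unfolding cut_cochain_def pq(1) by simp
qed

section \<open>Height-one posets and crowns\<close>

lemma Mset_eq_bijB_if_max_chains_are_edges:
  assumes max_chains: "\<And>C. max_chain X lt C \<longleftrightarrow> (\<exists>a b. C = [a,b] \<and> (a,b) \<in> basis X lt)"
  shows "Mset X lt = bijB X lt"
proof -
  have "increasing_on X lt \<theta> C" if "\<theta> \<in> bijB X lt" "max_chain X lt C" for \<theta> C
  proof -
    from that obtain a b where C: "C = [a,b]" and "(a,b) \<in> basis X lt"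
      using max_chains by blast
    with \<open>\<theta> \<in> bijB X lt\<close> have "\<theta> (a,b) \<in> basis X lt"
      unfolding bijB_def bij_betw_def by blast
    then obtain p q where pq: "\<theta> (a,b) = (p,q)" "(p,q) \<in> basis X lt"
      by (cases "\<theta> (a,b)") auto
    then have "max_chain X lt [p,q]" using max_chains by blast
    with C pq show ?thesis
      unfolding increasing_on_def by (intro exI[of _ "[p,q]"]) (auto simp: less_Suc_eq)
  qed
  then show ?thesis unfolding Mset_def by blast
qed

lemma crown_less_asym: "crown_less n a b \<Longrightarrow> \<not> crown_less n b a"
  unfolding crown_less_def by auto

lemma crown_basis_iff: "(a,b) \<in> basis (crown_X n) (crown_less n) \<longleftrightarrow> crown_less n a b"
  unfolding basis_def crown_less_def by auto

lemma crown_less_imp_mem: "crown_less n a b \<Longrightarrow> a \<in> crown_X n \<and> b \<in> crown_X n"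
  unfolding crown_less_def by simp

lemma crown_covers_iff: "covers (crown_X n) (crown_less n) a b \<longleftrightarrow> crown_less n a b"
  unfolding covers_def crown_less_def by auto

lemma finite_crown_X: "finite (crown_X n)"
proof -
  have "crown_X n = {1..n} \<times> UNIV" unfolding crown_X_def by auto
  then show ?thesis by simp
qed

lemma crown_chain_length_le_2:
  assumes "sorted_wrt (crown_less n) C" shows "length C \<le> 2"
proof (rule ccontr)
  assume "\<not> length C \<le> 2"
  then obtain a b c r where "C = a # b # c # r"
    by (auto simp: numeral_2_eq_2 not_less_eq_eq Suc_le_length_iff)
  with assms show False unfolding crown_less_def by auto
qed

lemma crown_max_chain_iff:
  "max_chain (crown_X n) (crown_less n) C \<longleftrightarrow> (\<exists>a b. C = [a,b] \<and> crown_less n a b)"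
proof
  assume max: "max_chain (crown_X n) (crown_less n) C"
  then have chain: "C \<noteq> []" "set C \<subseteq> crown_X n" "sorted_wrt (crown_less n) C"
    and maximal: "\<And>C'. is_chain (crown_X n) (crown_less n) C' \<Longrightarrow> \<not> set C \<subset> set C'"
    unfolding max_chain_def is_chain_def by auto
  show "\<exists>a b. C = [a,b] \<and> crown_less n a b"
  proof (cases C)
    case (Cons a r)
    show ?thesis
    proof (cases r)
      case Nil
      define C' where "C' = (if snd a then [(fst a, False), a] else [a, (fst a, True)])"
      have "is_chain (crown_X n) (crown_less n) C'" "set C \<subset> set C'"
        using chain Cons Nil unfolding C'_def is_chain_def crown_less_def crown_X_def
        by (cases a; auto)+
      then show ?thesis using maximal by blast
    next
      case (Cons b r')
      then show ?thesis using crown_chain_length_le_2[OF chain(3)] chain(3) \<open>C = a # r\<close> by auto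
    qed
  qed (use chain in simp)
next
  assume "\<exists>a b. C = [a,b] \<and> crown_less n a b"
  then obtain a b where C: "C = [a,b]" and ab: "crown_less n a b" by blast
  then have "a \<noteq> b" "set C \<subseteq> crown_X n" unfolding crown_less_def by auto
  then have "card (set C) = 2" using C by simp
  moreover have "card (set C') \<le> 2" if "is_chain (crown_X n) (crown_less n) C'" for C'
    using that crown_chain_length_le_2 card_length order_trans unfolding is_chain_def by blast
  ultimately have "\<not> (is_chain (crown_X n) (crown_less n) C' \<and> set C \<subset> set C')" for C'
    using psubset_card_mono[of "set C'" "set C"] by fastforce
  then show "max_chain (crown_X n) (crown_less n) C"
    unfolding max_chain_def is_chain_def using C ab \<open>set C \<subseteq> crown_X n\<close> by auto
qed

lemma crown_Mset_eq_bijB: "Mset (crown_X n) (crown_less n) = bijB (crown_X n) (crown_less n)"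
  by (rule Mset_eq_bijB_if_max_chains_are_edges) (simp add: crown_max_chain_iff crown_basis_iff)

lemma crown_AMset_iff:
  "\<theta> \<in> AMset (crown_X n) (crown_less n) \<longleftrightarrow>
     \<theta> \<in> bijB (crown_X n) (crown_less n) \<and> admissible (crown_X n) (crown_less n) \<theta>"
  unfolding AMset_def crown_Mset_eq_bijB by simp

lemma crown_Pset_subset_AMset: "Pset (crown_X n) (crown_less n) \<subseteq> AMset (crown_X n) (crown_less n)"
proof
  fix \<theta> assume proper: "\<theta> \<in> Pset (crown_X n) (crown_less n)"
  have "admissible (crown_X n) (crown_less n) \<theta>"
    using crown_less_asym proper by (rule proper_imp_admissible)
  with proper show "\<theta> \<in> AMset (crown_X n) (crown_less n)"
    unfolding crown_AMset_iff Pset_def by blast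
qed

section \<open>An admissible, non-proper bijection of \<open>Cr\<^sub>n\<close> for \<open>n \<ge> 3\<close>\<close>

definition crown_swap :: "nat \<Rightarrow> (nat \<times> bool) \<times> (nat \<times> bool) \<Rightarrow> (nat \<times> bool) \<times> (nat \<times> bool)" where
  "crown_swap n = restrict (transpose ((1,False),(1,True)) ((2,False),(2,True))) (basis (crown_X n) (crown_less n))"

lemma crown_swap_in_basis:
  assumes "n \<ge> 2" shows "((1,False),(1,True)) \<in> basis (crown_X n) (crown_less n)"
    and "((2,False),(2,True)) \<in> basis (crown_X n) (crown_less n)"
  unfolding crown_basis_iff using assms by (auto simp: crown_less_def crown_X_def)

lemma crown_swap_bijB:
  assumes "n \<ge> 2" shows "crown_swap n \<in> bijB (crown_X n) (crown_less n)"
  unfolding bijB_def crown_swap_def using crown_swap_in_basis[OF assms] by simp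

lemma crown_swap_involution:
  assumes "n \<ge> 2" and "e \<in> basis (crown_X n) (crown_less n)"
  shows "crown_swap n e \<in> basis (crown_X n) (crown_less n)" and "crown_swap n (crown_swap n e) = e"
  using assms crown_swap_in_basis[OF assms(1)] unfolding crown_swap_def transpose_def by auto

text \<open>The swap differs from the identity only on the end edges of the path
  \<open>x\<^sub>1 < y\<^sub>1 > x\<^sub>2 < y\<^sub>2\<close>, and the indicator of its interior \<open>{y\<^sub>1, x\<^sub>2}\<close>
  has coboundary \<open>e\<^sub>x\<^sub>1\<^sub>y\<^sub>1 - e\<^sub>x\<^sub>2\<^sub>y\<^sub>2\<close>; correcting the potential \<open>-[v = z]\<close>
  of the identity by a multiple of it gives a potential for the swap.\<close>

definition crown_swap_potential :: "nat \<times> bool \<Rightarrow> nat \<times> bool \<Rightarrow> int" where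
  "crown_swap_potential z v =
     (of_bool (z \<in> {(1,True),(2,False)}) - of_bool (z \<in> {(1,False),(2,True)})) *
       of_bool (v \<in> {(1,True),(2,False)}) - of_bool (v = z)"

lemma crown_swap_potential_diff:
  assumes "n \<ge> 2" and "crown_less n a b"
  shows "crown_swap_potential z b - crown_swap_potential z a =
    of_bool (fst (transpose ((1,False),(1,True)) ((2,False),(2,True)) (a,b)) = z) -
    of_bool (snd (transpose ((1,False),(1,True)) ((2,False),(2,True)) (a,b)) = z)"
proof -
  obtain i c j d where "a = (i,c)" "b = (j,d)" by (cases a, cases b)
  with assms show ?thesis
    unfolding crown_swap_potential_def crown_less_def crown_X_def transpose_def by (cases z) auto
qed

lemma crown_swap_admissible:
  assumes n: "n \<ge> 2" shows "admissible (crown_X n) (crown_less n) (crown_swap n)"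
proof (rule admissible_if_potentials[OF crown_less_asym])
  fix z assume z: "z \<in> crown_X n"
  have "cut_cochain (crown_X n) (crown_less n) (crown_swap n) z a b =
      crown_swap_potential z b - crown_swap_potential z a" if "crown_less n a b" for a b
  proof -
    have ab: "(a,b) \<in> basis (crown_X n) (crown_less n)" using that by (simp add: crown_basis_iff)
    have "cut_cochain (crown_X n) (crown_less n) (crown_swap n) z a b =
        of_bool (fst (crown_swap n (a,b)) = z) - of_bool (snd (crown_swap n (a,b)) = z)"
      using crown_swap_involution[OF n] ab z by (rule cut_cochain_involution)
    with ab show ?thesis using crown_swap_potential_diff[OF n that] by (simp add: crown_swap_def)
  qed
  then show "\<exists>g. \<forall>a\<in>crown_X n. \<forall>b\<in>crown_X n. crown_less n a b \<longrightarrow>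
      cut_cochain (crown_X n) (crown_less n) (crown_swap n) z a b = g b - g a"
    by blast
qed

lemma crown_swap_not_proper:
  assumes n: "n \<ge> 3" shows "crown_swap n \<notin> Pset (crown_X n) (crown_less n)"
proof
  have less: "crown_less n (1,False) (1,True)" "crown_less n (2,False) (1,True)"
    "crown_less n (2,False) (2,True)" "crown_less n (3,False) (2,True)"
    using n unfolding crown_less_def crown_X_def by auto
  then have swap: "crown_swap n ((1,False),(1,True)) = ((2,False),(2,True))"
    "crown_swap n ((2,False),(1,True)) = ((2,False),(1,True))"
    "crown_swap n ((2,False),(2,True)) = ((1,False),(1,True))"
    "crown_swap n ((3,False),(2,True)) = ((3,False),(2,True))"
    unfolding crown_swap_def by (simp_all add: crown_basis_iff)
  assume "crown_swap n \<in> Pset (crown_X n) (crown_less n)"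
  then consider
      \<phi> where "inj_on \<phi> (crown_X n)"
        "\<forall>x\<in>crown_X n. \<forall>y\<in>crown_X n. crown_less n x y \<longrightarrow> crown_swap n (x,y) = (\<phi> x, \<phi> y)"
    | \<phi> where
        "\<forall>x\<in>crown_X n. \<forall>y\<in>crown_X n. crown_less n x y \<longrightarrow> crown_swap n (x,y) = (\<phi> y, \<phi> x)"
    unfolding Pset_def bij_betw_def by fast
  then show False
  proof cases
    case 1
    have "\<phi> (1,False) = (2,False)" "\<phi> (2,False) = (2,False)"
      using 1(2) less(1,2) swap(1,2) crown_less_imp_mem by force+
    moreover have "(1,False) \<in> crown_X n" "(2,False) \<in> crown_X n"
      using crown_less_imp_mem less by blast+
    ultimately have "(1::nat, False) = (2, False)" using inj_onD[OF 1(1)] by metis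
    then show False by simp
  next
    case 2
    have "\<phi> (2,True) = (1,False)" "\<phi> (2,True) = (3,False)"
      using 2 less(3,4) swap(3,4) crown_less_imp_mem by force+
    then show False by simp
  qed
qed

section \<open>The 2-crown\<close>

lemma crown2_X: "crown_X 2 = {(1,False),(1,True),(2,False),(2,True)}"
  unfolding crown_X_def by auto

lemma crown2_less_iff: "crown_less 2 a b \<longleftrightarrow> a \<in> crown_X 2 \<and> b \<in> crown_X 2 \<and> \<not> snd a \<and> snd b"
  unfolding crown_less_def crown_X_def by auto

lemma crown2_basis:
  "basis (crown_X 2) (crown_less 2) =
     {((1,False),(1,True)), ((2,False),(1,True)), ((2,False),(2,True)), ((1,False),(2,True))}"
proof -
  have "crown_less 2 a b \<longleftrightarrow>
      (a,b) \<in> {((1,False),(1,True)), ((2,False),(1,True)), ((2,False),(2,True)), ((1,False),(2,True))}"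
    for a b unfolding crown2_less_iff crown2_X by (cases a; cases b) auto
  then show ?thesis unfolding basis_def by (auto simp: crown2_X)
qed

definition crown2_cycle :: "(nat \<times> bool) list" where
  "crown2_cycle = [(1,False),(1,True),(2,False),(2,True),(1,False)]"

lemma closed_walk_crown2_cycle: "closed_walk (crown_X 2) (crown_less 2) crown2_cycle"
  unfolding closed_walk_def crown_covers_iff crown2_cycle_def
  by (auto simp: crown2_X crown2_less_iff less_Suc_eq nth_Cons split: nat.splits)

lemma walk_integral_crown2_cycle:
  "walk_integral (crown_less 2) c crown2_cycle =
     c (1,False) (1,True) - c (2,False) (1,True) + c (2,False) (2,True) - c (1,False) (2,True)"
  by (simp add: walk_integral_def crown2_cycle_def crown2_less_iff crown2_X lessThan_nat_numeral)

lemma crown2_cut_cochain_minimal: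
  assumes "i \<in> {1,2}"
  shows "cut_cochain (crown_X 2) (crown_less 2) \<theta> (i,False) =
    (\<lambda>a b. of_bool ((a,b) \<in> {\<theta> ((i,False),(1,True)), \<theta> ((i,False),(2,True))}))"
  using assms unfolding cut_cochain_def crown2_less_iff crown2_X by (intro ext) auto

lemma crown2_cut_cochain_maximal:
  assumes "j \<in> {1,2}"
  shows "cut_cochain (crown_X 2) (crown_less 2) \<theta> (j,True) =
    (\<lambda>a b. - of_bool ((a,b) \<in> {\<theta> ((1,False),(j,True)), \<theta> ((2,False),(j,True))}))"
  using assms unfolding cut_cochain_def crown2_less_iff crown2_X by (intro ext) auto

definition crown2_diagonal :: "(nat \<times> bool) \<times> (nat \<times> bool) \<Rightarrow> bool" where
  "crown2_diagonal e \<longleftrightarrow> fst (fst e) = fst (snd e)"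

lemma crown2_balanced_pair:
  assumes "e \<in> basis (crown_X 2) (crown_less 2)" "e' \<in> basis (crown_X 2) (crown_less 2)" "e \<noteq> e'"
    and "walk_integral (crown_less 2) (\<lambda>a b. of_bool ((a,b) \<in> {e,e'})) crown2_cycle = 0"
  shows "crown2_diagonal e \<noteq> crown2_diagonal e'"
  using assms unfolding walk_integral_crown2_cycle crown2_basis crown2_diagonal_def
  by (elim insertE emptyE) simp_all

lemma crown2_edge_images:
  assumes "\<theta> \<in> bijB (crown_X 2) (crown_less 2)"
  shows "\<And>i j. i \<in> {1,2} \<Longrightarrow> j \<in> {1,2} \<Longrightarrow> \<theta> ((i,False),(j,True)) \<in> basis (crown_X 2) (crown_less 2)"
    and "distinct [\<theta> ((1,False),(1,True)), \<theta> ((1,False),(2,True)), \<theta> ((2,False),(1,True)), \<theta> ((2,False),(2,True))]"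
proof -
  have bij_basis: "bij_betw \<theta> (basis (crown_X 2) (crown_less 2)) (basis (crown_X 2) (crown_less 2))"
    using assms unfolding bijB_def by blast
  have edges: "((i,False),(j,True)) \<in> basis (crown_X 2) (crown_less 2)" if "i \<in> {1,2}" "j \<in> {1,2}" for i j
    using that unfolding crown2_basis by auto
  show "\<theta> ((i,False),(j,True)) \<in> basis (crown_X 2) (crown_less 2)" if "i \<in> {1,2}" "j \<in> {1,2}" for i j
    using bij_basis edges[OF that] by (rule bij_betw_apply)
  have "inj_on \<theta> (set [((1,False),(1,True)), ((1,False),(2,True)), ((2,False),(1,True)), ((2,False),(2,True))])"
    using bij_betw_imp_inj_on[OF bij_basis] by (rule inj_on_subset) (use edges in auto)
  then show "distinct [\<theta> ((1,False),(1,True)), \<theta> ((1,False),(2,True)), \<theta> ((2,False),(1,True)), \<theta> ((2,False),(2,True))]"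
    using distinct_map[of \<theta> "[((1,False),(1,True)), ((1,False),(2,True)), ((2,False),(1,True)), ((2,False),(2,True))]"]
    by simp
qed

lemma crown2_admissible_alternating:
  assumes bij: "\<theta> \<in> bijB (crown_X 2) (crown_less 2)" and adm: "admissible (crown_X 2) (crown_less 2) \<theta>"
    and i: "i \<in> {1,2}"
  shows "crown2_diagonal (\<theta> ((i,False),(1,True))) \<noteq> crown2_diagonal (\<theta> ((i,False),(2,True)))"
    and "crown2_diagonal (\<theta> ((1,False),(i,True))) \<noteq> crown2_diagonal (\<theta> ((2,False),(i,True)))"
proof -
  have balance: "walk_integral (crown_less 2) (cut_cochain (crown_X 2) (crown_less 2) \<theta> z) crown2_cycle = 0"
    if "z \<in> crown_X 2" for z
    using adm closed_walk_crown2_cycle that unfolding admissible_iff_walk_integral by blast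
  have in_X: "(i,False) \<in> crown_X 2" "(i,True) \<in> crown_X 2" using i by (auto simp: crown2_X)
  note images = crown2_edge_images[OF bij]
  show "crown2_diagonal (\<theta> ((i,False),(1,True))) \<noteq> crown2_diagonal (\<theta> ((i,False),(2,True)))"
  proof (rule crown2_balanced_pair)
    show "walk_integral (crown_less 2)
        (\<lambda>a b. of_bool ((a,b) \<in> {\<theta> ((i,False),(1,True)), \<theta> ((i,False),(2,True))})) crown2_cycle = 0"
      using balance[OF in_X(1)] unfolding crown2_cut_cochain_minimal[OF i] .
  qed (use i images in auto)
  show "crown2_diagonal (\<theta> ((1,False),(i,True))) \<noteq> crown2_diagonal (\<theta> ((2,False),(i,True)))"
  proof (rule crown2_balanced_pair)
    show "walk_integral (crown_less 2)
        (\<lambda>a b. of_bool ((a,b) \<in> {\<theta> ((1,False),(i,True)), \<theta> ((2,False),(i,True))})) crown2_cycle = 0"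
      using balance[OF in_X(2)] unfolding crown2_cut_cochain_maximal[OF i] walk_integral_uminus by simp
  qed (use i images in auto)
qed

text \<open>Distinct edges of \<open>Cr\<^sub>2\<close> share a vertex iff they differ in diagonality, so \<open>t\<close>
  preserves adjacency of edges; the adjacency-preserving permutations of the edges of the
  4-cycle are the products (\<open>r = False\<close>) and the transposed products (\<open>r = True\<close>).\<close>

lemma crown2_alternating_cases:
  fixes t :: "nat \<Rightarrow> nat \<Rightarrow> (nat \<times> bool) \<times> (nat \<times> bool)"
  assumes "\<And>i j. i \<in> {1,2} \<Longrightarrow> j \<in> {1,2} \<Longrightarrow> t i j \<in> basis (crown_X 2) (crown_less 2)"
    and "distinct [t 1 1, t 1 2, t 2 1, t 2 2]"
    and "\<And>i. i \<in> {1,2} \<Longrightarrow> crown2_diagonal (t i 1) \<noteq> crown2_diagonal (t i 2)"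
    and "\<And>j. j \<in> {1,2} \<Longrightarrow> crown2_diagonal (t 1 j) \<noteq> crown2_diagonal (t 2 j)"
  shows "\<exists>r. \<forall>i\<in>{1,2}. \<forall>j\<in>{1,2}.
           t i j = (if r then (fst (t 1 j), snd (t i 1)) else (fst (t i 1), snd (t 1 j)))"
proof -
  have "t 1 1 \<in> basis (crown_X 2) (crown_less 2)" "t 1 2 \<in> basis (crown_X 2) (crown_less 2)"
    "t 2 1 \<in> basis (crown_X 2) (crown_less 2)" "t 2 2 \<in> basis (crown_X 2) (crown_less 2)"
    and "crown2_diagonal (t 1 1) \<noteq> crown2_diagonal (t 1 2)"
    "crown2_diagonal (t 2 1) \<noteq> crown2_diagonal (t 2 2)"
    "crown2_diagonal (t 1 1) \<noteq> crown2_diagonal (t 2 1)"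
    "crown2_diagonal (t 1 2) \<noteq> crown2_diagonal (t 2 2)"
    using assms(1,3,4) by simp_all
  with assms(2) show ?thesis
    unfolding crown2_basis crown2_diagonal_def by (elim insertE emptyE) (simp_all add: ex_bool_eq)
qed

lemma crown2_Pset_if_level_map:
  assumes bij: "\<theta> \<in> bijB (crown_X 2) (crown_less 2)"
    and maps: "\<And>v. v \<in> crown_X 2 \<Longrightarrow> \<phi> v \<in> crown_X 2 \<and> snd (\<phi> v) = (snd v \<noteq> r)"
    and edge: "\<And>a b. crown_less 2 a b \<Longrightarrow> \<theta> (a,b) = (if r then (\<phi> b, \<phi> a) else (\<phi> a, \<phi> b))"
  shows "\<theta> \<in> Pset (crown_X 2) (crown_less 2)"
proof -
  have inj: "inj_on \<theta> (basis (crown_X 2) (crown_less 2))"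
    using bij unfolding bijB_def bij_betw_def by blast
  have "inj_on \<phi> (crown_X 2)"
  proof (rule inj_onI)
    fix u v assume u: "u \<in> crown_X 2" and v: "v \<in> crown_X 2" and uv: "\<phi> u = \<phi> v"
    then have "snd u = snd v" using maps by metis
    show "u = v"
    proof (cases "snd u")
      case True
      then have "crown_less 2 (1,False) u" "crown_less 2 (1,False) v"
        using u v \<open>snd u = snd v\<close> by (simp_all add: crown2_less_iff crown2_X)
      then have "((1,False),u) = ((1,False),v)"
        using inj_onD[OF inj, of "((1,False),u)" "((1,False),v)"] edge uv by (simp add: crown_basis_iff)
      then show ?thesis by simp
    next
      case False
      then have "crown_less 2 u (1,True)" "crown_less 2 v (1,True)"
        using u v \<open>snd u = snd v\<close> by (simp_all add: crown2_less_iff crown2_X)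
      then have "(u,(1,True)) = (v,(1,True))"
        using inj_onD[OF inj, of "(u,(1,True))" "(v,(1,True))"] edge uv by (simp add: crown_basis_iff)
      then show ?thesis by simp
    qed
  qed
  moreover have "\<phi> ` crown_X 2 \<subseteq> crown_X 2" using maps by auto
  ultimately have "bij_betw \<phi> (crown_X 2) (crown_X 2)"
    unfolding bij_betw_def using endo_inj_surj[OF finite_crown_X] by blast
  moreover have "crown_less 2 x y \<longleftrightarrow> (if r then crown_less 2 (\<phi> y) (\<phi> x) else crown_less 2 (\<phi> x) (\<phi> y))"
    if "x \<in> crown_X 2" "y \<in> crown_X 2" for x y
    using maps[OF that(1)] maps[OF that(2)] that unfolding crown2_less_iff by auto
  ultimately show ?thesis using bij edge unfolding Pset_def by (cases r) auto
qed

lemma crown2_admissible_imp_proper: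
  assumes bij: "\<theta> \<in> bijB (crown_X 2) (crown_less 2)" and adm: "admissible (crown_X 2) (crown_less 2) \<theta>"
  shows "\<theta> \<in> Pset (crown_X 2) (crown_less 2)"
proof -
  define t where "t i j = \<theta> ((i,False),(j,True))" for i j
  note images = crown2_edge_images[OF bij, folded t_def]
  note alternating = crown2_admissible_alternating[OF bij adm, folded t_def]
  obtain r where r: "\<And>i j. i \<in> {1,2} \<Longrightarrow> j \<in> {1,2} \<Longrightarrow>
      t i j = (if r then (fst (t 1 j), snd (t i 1)) else (fst (t i 1), snd (t 1 j)))"
    using crown2_alternating_cases[OF images alternating] by blast
  have endpoints: "fst (t i j) \<in> crown_X 2 \<and> snd (t i j) \<in> crown_X 2 \<and>
      \<not> snd (fst (t i j)) \<and> snd (snd (t i j))" if "i \<in> {1,2}" "j \<in> {1,2}" for i j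
    using images(1)[OF that] by (metis crown_basis_iff crown2_less_iff prod.collapse)
  \<comment> \<open>The images of the two edges at a vertex share one endpoint, the image of the vertex.\<close>
  define \<phi> where "\<phi> v = (if snd v = r then fst else snd) (if snd v then t 1 (fst v) else t (fst v) 1)" for v
  show ?thesis
  proof (rule crown2_Pset_if_level_map[OF bij])
    fix v assume "v \<in> crown_X 2"
    then have "fst v \<in> {1,2}" by (auto simp: crown2_X)
    then show "\<phi> v \<in> crown_X 2 \<and> snd (\<phi> v) = (snd v \<noteq> r)"
      using endpoints[of 1 "fst v"] endpoints[of "fst v" 1] unfolding \<phi>_def by auto
  next
    fix a b assume "crown_less 2 a b"
    then obtain i j where ab: "a = (i,False)" "b = (j,True)" and ij: "i \<in> {1,2}" "j \<in> {1,2}"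
      unfolding crown2_less_iff crown2_X by auto
    then show "\<theta> (a,b) = (if r then (\<phi> b, \<phi> a) else (\<phi> a, \<phi> b))"
      using r[OF ij] unfolding \<phi>_def ab t_def[symmetric] by simp
  qed
qed

theorem corollary4p12:
  shows "Pset (crown_X 2) (crown_less 2) = AMset (crown_X 2) (crown_less 2) \<and>
    (\<forall>n::nat. n > 2 \<longrightarrow> Pset (crown_X n) (crown_less n) \<noteq> AMset (crown_X n) (crown_less n))"
proof (intro conjI allI impI)
  show "Pset (crown_X 2) (crown_less 2) = AMset (crown_X 2) (crown_less 2)"
  proof
    show "Pset (crown_X 2) (crown_less 2) \<subseteq> AMset (crown_X 2) (crown_less 2)"
      by (rule crown_Pset_subset_AMset)
    show "AMset (crown_X 2) (crown_less 2) \<subseteq> Pset (crown_X 2) (crown_less 2)"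
      by (auto simp: crown_AMset_iff intro: crown2_admissible_imp_proper)
  qed
next
  fix n :: nat assume "n > 2"
  then have "crown_swap n \<in> AMset (crown_X n) (crown_less n)"
    by (simp add: crown_AMset_iff crown_swap_bijB crown_swap_admissible)
  moreover have "crown_swap n \<notin> Pset (crown_X n) (crown_less n)"
    using \<open>n > 2\<close> crown_swap_not_proper by simp
  ultimately show "Pset (crown_X n) (crown_less n) \<noteq> AMset (crown_X n) (crown_less n)" by blast
qed

end
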